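(* Let $F\colon\mathbb{A}\to\mathbb{B}$ be a double functor. Then $F$ is a double trivial fibration if and only if both $\mathbf{H}F\colon\mathbf{H}\mathbb{A}\to\mathbf{H}\mathbb{B}$ and $\mathcal{V}F\colon\mathcal{V}\mathbb{A}\to\mathcal{V}\mathbb{B}$ are trivial fibrations in the Lack model structure on $2\mathrm{Cat}$ (i.e.\ 2-functors that are both biequivalences and Lack fibrations).
   Context: A double category has objects, horizontal morphisms, vertical morphisms and squares; a square $\alpha\colon(u\,{}^{a}_{b}\,v)$ has top horizontal boundary $a\colon A\to B$, bottom $b\colon A'\to B'$, left vertical boundary $u\colon A\to A'$ and right $v\colon B\to B'$; $e_A$ is the vertical identity on $A$. $\mathbf{H}\mathbb{A}$ is the underlying horizontal 2-category (objects, horizontal morphisms, and as 2-cells $a\Rightarrow b$ the squares $(e_A\,{}^{a}_{b}\,e_B)$). $\mathcal{V}\mathbb{A}$ is the 2-category whose objects are vertical morphisms of $\mathbb{A}$, morphisms $u\to v$ are squares with left boundary $u$ and right boundary $v$, and 2-cells from $\alpha\colon(u\,{}^{a}_{b}\,v)$ to $\beta\colon(u\,{}^{c}_{d}\,v)$ are pairs of squares $\sigma_0\colon(e_A\,{}^{a}_{c}\,e_B)$, $\sigma_1\colon(e_{A'}\,{}^{b}_{d}\,e_{B'})$ with $\sigma_0$ on top of $\beta$ equal to $\alpha$ on top of $\sigma_1$. A 2-functor $G\colon\mathcal{A}\to\mathcal{B}$ is a biequivalence if it is essentially surjective up to equivalence on objects, essentially full up to invertible 2-cell on morphisms, and fully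 faithful on 2-cells; it is a Lack fibration if equivalences $b\colon B\to GC$ lift to equivalences $a\colon A\to C$ with $Ga=b$, and invertible 2-cells $\beta\colon b\cong Gc$ lift to invertible 2-cells $\alpha\colon a\cong c$ with $G\alpha=\beta$. A double functor $F\colon\mathbb{A}\to\mathbb{B}$ is a double trivial fibration if (dt1) it is surjective on objects; (dt2) for every horizontal morphism $b\colon FA\to FC$ there is a horizontal morphism $a\colon A\to C$ with $Fa=b$; (dt3) every vertical morphism of $\mathbb{B}$ is of the form $Fu$ for some vertical morphism $u$ of $\mathbb{A}$; (dt4) for every square $\beta\colon(Fu\,{}^{Fa}_{Fc}\,Fu')$ in $\mathbb{B}$ there is a unique square $\alpha\colon(u\,{}^{a}_{c}\,u')$ in $\mathbb{A}$ with $F\alpha=\beta$. *)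

theory Defs
  imports Main
begin

section \<open>Strict double categories\<close>

text \<open>All compositions are written in diagrammatic order:
  hcomp a b : a followed by b (horizontal morphisms);
  vcomp u v : u followed by v (vertical morphisms);
  shcomp \<alpha> \<beta> : \<alpha> placed to the left of \<beta> (horizontal pasting of squares);
  svcomp \<alpha> \<beta> : \<alpha> placed on top of \<beta> (vertical pasting of squares).
  shid u is the horizontal identity square (u, 1, 1, u) on a vertical morphism u;
  svid a is the vertical identity square (e, a, a, e) on a horizontal morphism a.\<close>

record ('o,'h,'v,'s) dblcat =
  Obj :: "'o set"
  Hor :: "'h set"
  Ver :: "'v set"
  Sq  :: "'s set"
  hdom :: "'h \<Rightarrow> 'o"
  hcod :: "'h \<Rightarrow> 'o"
  hcomp :: "'h \<Rightarrow> 'h \<Rightarrow> 'h"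
  hid :: "'o \<Rightarrow> 'h"
  vdom :: "'v \<Rightarrow> 'o"
  vcod :: "'v \<Rightarrow> 'o"
  vcomp :: "'v \<Rightarrow> 'v \<Rightarrow> 'v"
  vid :: "'o \<Rightarrow> 'v"
  stop :: "'s \<Rightarrow> 'h"
  sbot :: "'s \<Rightarrow> 'h"
  sleft :: "'s \<Rightarrow> 'v"
  sright :: "'s \<Rightarrow> 'v"
  shcomp :: "'s \<Rightarrow> 's \<Rightarrow> 's"
  svcomp :: "'s \<Rightarrow> 's \<Rightarrow> 's"
  shid :: "'v \<Rightarrow> 's"
  svid :: "'h \<Rightarrow> 's"

definition is_dblcat :: "('o,'h,'v,'s,'z) dblcat_scheme \<Rightarrow> bool" where
  "is_dblcat A \<longleftrightarrow>
   \<comment> \<open>horizontal category\<close>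
   (\<forall>a\<in>Hor A. hdom A a \<in> Obj A \<and> hcod A a \<in> Obj A) \<and>
   (\<forall>x\<in>Obj A. hid A x \<in> Hor A \<and> hdom A (hid A x) = x \<and> hcod A (hid A x) = x) \<and>
   (\<forall>a\<in>Hor A. \<forall>b\<in>Hor A. hcod A a = hdom A b \<longrightarrow>
      hcomp A a b \<in> Hor A \<and> hdom A (hcomp A a b) = hdom A a \<and> hcod A (hcomp A a b) = hcod A b) \<and>
   (\<forall>a\<in>Hor A. hcomp A (hid A (hdom A a)) a = a \<and> hcomp A a (hid A (hcod A a)) = a) \<and>
   (\<forall>a\<in>Hor A. \<forall>b\<in>Hor A. \<forall>c\<in>Hor A. hcod A a = hdom A b \<longrightarrow> hcod A b = hdom A c \<longrightarrow>
      hcomp A (hcomp A a b) c = hcomp A a (hcomp A b c)) \<and>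
   \<comment> \<open>vertical category\<close>
   (\<forall>u\<in>Ver A. vdom A u \<in> Obj A \<and> vcod A u \<in> Obj A) \<and>
   (\<forall>x\<in>Obj A. vid A x \<in> Ver A \<and> vdom A (vid A x) = x \<and> vcod A (vid A x) = x) \<and>
   (\<forall>u\<in>Ver A. \<forall>v\<in>Ver A. vcod A u = vdom A v \<longrightarrow>
      vcomp A u v \<in> Ver A \<and> vdom A (vcomp A u v) = vdom A u \<and> vcod A (vcomp A u v) = vcod A v) \<and>
   (\<forall>u\<in>Ver A. vcomp A (vid A (vdom A u)) u = u \<and> vcomp A u (vid A (vcod A u)) = u) \<and>
   (\<forall>u\<in>Ver A. \<forall>v\<in>Ver A. \<forall>w\<in>Ver A. vcod A u = vdom A v \<longrightarrow> vcod A v = vdom A w \<longrightarrow>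
      vcomp A (vcomp A u v) w = vcomp A u (vcomp A v w)) \<and>
   \<comment> \<open>boundaries of squares\<close>
   (\<forall>\<alpha>\<in>Sq A. stop A \<alpha> \<in> Hor A \<and> sbot A \<alpha> \<in> Hor A \<and> sleft A \<alpha> \<in> Ver A \<and> sright A \<alpha> \<in> Ver A \<and>
      hdom A (stop A \<alpha>) = vdom A (sleft A \<alpha>) \<and> hcod A (stop A \<alpha>) = vdom A (sright A \<alpha>) \<and>
      hdom A (sbot A \<alpha>) = vcod A (sleft A \<alpha>) \<and> hcod A (sbot A \<alpha>) = vcod A (sright A \<alpha>)) \<and>
   \<comment> \<open>horizontal composition of squares\<close>
   (\<forall>\<alpha>\<in>Sq A. \<forall>\<beta>\<in>Sq A. sright A \<alpha> = sleft A \<beta> \<longrightarrow>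
      shcomp A \<alpha> \<beta> \<in> Sq A \<and> sleft A (shcomp A \<alpha> \<beta>) = sleft A \<alpha> \<and> sright A (shcomp A \<alpha> \<beta>) = sright A \<beta> \<and>
      stop A (shcomp A \<alpha> \<beta>) = hcomp A (stop A \<alpha>) (stop A \<beta>) \<and>
      sbot A (shcomp A \<alpha> \<beta>) = hcomp A (sbot A \<alpha>) (sbot A \<beta>)) \<and>
   (\<forall>u\<in>Ver A. shid A u \<in> Sq A \<and> sleft A (shid A u) = u \<and> sright A (shid A u) = u \<and>
      stop A (shid A u) = hid A (vdom A u) \<and> sbot A (shid A u) = hid A (vcod A u)) \<and>
   (\<forall>\<alpha>\<in>Sq A. shcomp A (shid A (sleft A \<alpha>)) \<alpha> = \<alpha> \<and> shcomp A \<alpha> (shid A (sright A \<alpha>)) = \<alpha>) \<and>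
   (\<forall>\<alpha>\<in>Sq A. \<forall>\<beta>\<in>Sq A. \<forall>\<gamma>\<in>Sq A. sright A \<alpha> = sleft A \<beta> \<longrightarrow> sright A \<beta> = sleft A \<gamma> \<longrightarrow>
      shcomp A (shcomp A \<alpha> \<beta>) \<gamma> = shcomp A \<alpha> (shcomp A \<beta> \<gamma>)) \<and>
   \<comment> \<open>vertical composition of squares\<close>
   (\<forall>\<alpha>\<in>Sq A. \<forall>\<beta>\<in>Sq A. sbot A \<alpha> = stop A \<beta> \<longrightarrow>
      svcomp A \<alpha> \<beta> \<in> Sq A \<and> stop A (svcomp A \<alpha> \<beta>) = stop A \<alpha> \<and> sbot A (svcomp A \<alpha> \<beta>) = sbot A \<beta> \<and>
      sleft A (svcomp A \<alpha> \<beta>) = vcomp A (sleft A \<alpha>) (sleft A \<beta>) \<and>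
      sright A (svcomp A \<alpha> \<beta>) = vcomp A (sright A \<alpha>) (sright A \<beta>)) \<and>
   (\<forall>a\<in>Hor A. svid A a \<in> Sq A \<and> stop A (svid A a) = a \<and> sbot A (svid A a) = a \<and>
      sleft A (svid A a) = vid A (hdom A a) \<and> sright A (svid A a) = vid A (hcod A a)) \<and>
   (\<forall>\<alpha>\<in>Sq A. svcomp A (svid A (stop A \<alpha>)) \<alpha> = \<alpha> \<and> svcomp A \<alpha> (svid A (sbot A \<alpha>)) = \<alpha>) \<and>
   (\<forall>\<alpha>\<in>Sq A. \<forall>\<beta>\<in>Sq A. \<forall>\<gamma>\<in>Sq A. sbot A \<alpha> = stop A \<beta> \<longrightarrow> sbot A \<beta> = stop A \<gamma> \<longrightarrow>
      svcomp A (svcomp A \<alpha> \<beta>) \<gamma> = svcomp A \<alpha> (svcomp A \<beta> \<gamma>)) \<and>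
   \<comment> \<open>compatibilities and interchange\<close>
   (\<forall>x\<in>Obj A. shid A (vid A x) = svid A (hid A x)) \<and>
   (\<forall>u\<in>Ver A. \<forall>v\<in>Ver A. vcod A u = vdom A v \<longrightarrow>
      shid A (vcomp A u v) = svcomp A (shid A u) (shid A v)) \<and>
   (\<forall>a\<in>Hor A. \<forall>b\<in>Hor A. hcod A a = hdom A b \<longrightarrow>
      svid A (hcomp A a b) = shcomp A (svid A a) (svid A b)) \<and>
   (\<forall>\<alpha>\<in>Sq A. \<forall>\<beta>\<in>Sq A. \<forall>\<gamma>\<in>Sq A. \<forall>\<delta>\<in>Sq A.
      sright A \<alpha> = sleft A \<beta> \<longrightarrow> sright A \<gamma> = sleft A \<delta> \<longrightarrow>
      sbot A \<alpha> = stop A \<gamma> \<longrightarrow> sbot A \<beta> = stop A \<delta> \<longrightarrow>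
      svcomp A (shcomp A \<alpha> \<beta>) (shcomp A \<gamma> \<delta>) = shcomp A (svcomp A \<alpha> \<gamma>) (svcomp A \<beta> \<delta>))"

record ('o1,'h1,'v1,'s1,'o2,'h2,'v2,'s2) dblfun =
  fO :: "'o1 \<Rightarrow> 'o2"
  fH :: "'h1 \<Rightarrow> 'h2"
  fV :: "'v1 \<Rightarrow> 'v2"
  fS :: "'s1 \<Rightarrow> 's2"

definition is_dblfun ::
  "('o1,'h1,'v1,'s1) dblcat \<Rightarrow> ('o2,'h2,'v2,'s2) dblcat \<Rightarrow>
   ('o1,'h1,'v1,'s1,'o2,'h2,'v2,'s2) dblfun \<Rightarrow> bool" where
  "is_dblfun A B F \<longleftrightarrow>
   (\<forall>x\<in>Obj A. fO F x \<in> Obj B) \<and>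
   (\<forall>a\<in>Hor A. fH F a \<in> Hor B \<and> hdom B (fH F a) = fO F (hdom A a) \<and> hcod B (fH F a) = fO F (hcod A a)) \<and>
   (\<forall>u\<in>Ver A. fV F u \<in> Ver B \<and> vdom B (fV F u) = fO F (vdom A u) \<and> vcod B (fV F u) = fO F (vcod A u)) \<and>
   (\<forall>\<alpha>\<in>Sq A. fS F \<alpha> \<in> Sq B \<and> stop B (fS F \<alpha>) = fH F (stop A \<alpha>) \<and> sbot B (fS F \<alpha>) = fH F (sbot A \<alpha>) \<and>
      sleft B (fS F \<alpha>) = fV F (sleft A \<alpha>) \<and> sright B (fS F \<alpha>) = fV F (sright A \<alpha>)) \<and>
   (\<forall>x\<in>Obj A. fH F (hid A x) = hid B (fO F x) \<and> fV F (vid A x) = vid B (fO F x)) \<and>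
   (\<forall>a\<in>Hor A. \<forall>b\<in>Hor A. hcod A a = hdom A b \<longrightarrow> fH F (hcomp A a b) = hcomp B (fH F a) (fH F b)) \<and>
   (\<forall>u\<in>Ver A. \<forall>v\<in>Ver A. vcod A u = vdom A v \<longrightarrow> fV F (vcomp A u v) = vcomp B (fV F u) (fV F v)) \<and>
   (\<forall>u\<in>Ver A. fS F (shid A u) = shid B (fV F u)) \<and>
   (\<forall>a\<in>Hor A. fS F (svid A a) = svid B (fH F a)) \<and>
   (\<forall>\<alpha>\<in>Sq A. \<forall>\<beta>\<in>Sq A. sright A \<alpha> = sleft A \<beta> \<longrightarrow> fS F (shcomp A \<alpha> \<beta>) = shcomp B (fS F \<alpha>) (fS F \<beta>)) \<and>
   (\<forall>\<alpha>\<in>Sq A. \<forall>\<beta>\<in>Sq A. sbot A \<alpha> = stop A \<beta> \<longrightarrow> fS F (svcomp A \<alpha> \<beta>) = svcomp B (fS F \<alpha>) (fS F \<beta>))"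

definition double_trivial_fibration ::
  "('o1,'h1,'v1,'s1) dblcat \<Rightarrow> ('o2,'h2,'v2,'s2) dblcat \<Rightarrow>
   ('o1,'h1,'v1,'s1,'o2,'h2,'v2,'s2) dblfun \<Rightarrow> bool" where
  "double_trivial_fibration A B F \<longleftrightarrow>
   \<comment> \<open>(dt1)\<close>
   (\<forall>y\<in>Obj B. \<exists>x\<in>Obj A. fO F x = y) \<and>
   \<comment> \<open>(dt2)\<close>
   (\<forall>x\<in>Obj A. \<forall>z\<in>Obj A. \<forall>b\<in>Hor B. hdom B b = fO F x \<longrightarrow> hcod B b = fO F z \<longrightarrow>
      (\<exists>a\<in>Hor A. hdom A a = x \<and> hcod A a = z \<and> fH F a = b)) \<and>
   \<comment> \<open>(dt3)\<close>
   (\<forall>v\<in>Ver B. \<exists>u\<in>Ver A. fV F u = v) \<and>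
   \<comment> \<open>(dt4)\<close>
   (\<forall>u\<in>Ver A. \<forall>u'\<in>Ver A. \<forall>a\<in>Hor A. \<forall>c\<in>Hor A.
      hdom A a = vdom A u \<longrightarrow> hcod A a = vdom A u' \<longrightarrow>
      hdom A c = vcod A u \<longrightarrow> hcod A c = vcod A u' \<longrightarrow>
      (\<forall>\<beta>\<in>Sq B. sleft B \<beta> = fV F u \<longrightarrow> sright B \<beta> = fV F u' \<longrightarrow>
         stop B \<beta> = fH F a \<longrightarrow> sbot B \<beta> = fH F c \<longrightarrow>
         (\<exists>!\<alpha>. \<alpha> \<in> Sq A \<and> sleft A \<alpha> = u \<and> sright A \<alpha> = u' \<and> stop A \<alpha> = a \<and> sbot A \<alpha> = c
               \<and> fS F \<alpha> = \<beta>)))"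

section \<open>2-categories (data) and 2-functors\<close>

text \<open>Compositions again diagrammatic: mcomp f g is f followed by g; ccompv \<theta> \<psi> is the
  vertical composite of \<theta> followed by \<psi>; ccomph is horizontal composition of 2-cells.\<close>

record ('o,'m,'c) twocat =
  TObj :: "'o set"
  TMor :: "'m set"
  TCell :: "'c set"
  mdom :: "'m \<Rightarrow> 'o"
  mcod :: "'m \<Rightarrow> 'o"
  mcomp :: "'m \<Rightarrow> 'm \<Rightarrow> 'm"
  mid :: "'o \<Rightarrow> 'm"
  cdom :: "'c \<Rightarrow> 'm"
  ccod :: "'c \<Rightarrow> 'm"
  ccompv :: "'c \<Rightarrow> 'c \<Rightarrow> 'c"
  ccomph :: "'c \<Rightarrow> 'c \<Rightarrow> 'c"
  cid :: "'m \<Rightarrow> 'c"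

record ('o1,'m1,'c1,'o2,'m2,'c2) twofun =
  G0 :: "'o1 \<Rightarrow> 'o2"
  G1 :: "'m1 \<Rightarrow> 'm2"
  G2 :: "'c1 \<Rightarrow> 'c2"

definition is_mor :: "('o,'m,'c) twocat \<Rightarrow> 'm \<Rightarrow> 'o \<Rightarrow> 'o \<Rightarrow> bool" where
  "is_mor C f x y \<longleftrightarrow> f \<in> TMor C \<and> mdom C f = x \<and> mcod C f = y"

definition is_cell :: "('o,'m,'c) twocat \<Rightarrow> 'c \<Rightarrow> 'm \<Rightarrow> 'm \<Rightarrow> bool" where
  "is_cell C \<theta> f g \<longleftrightarrow> \<theta> \<in> TCell C \<and> cdom C \<theta> = f \<and> ccod C \<theta> = g"

definition invertible_cell :: "('o,'m,'c) twocat \<Rightarrow> 'c \<Rightarrow> bool" where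
  "invertible_cell C \<theta> \<longleftrightarrow> \<theta> \<in> TCell C \<and>
     (\<exists>\<psi>. is_cell C \<psi> (ccod C \<theta>) (cdom C \<theta>) \<and>
          ccompv C \<theta> \<psi> = cid C (cdom C \<theta>) \<and> ccompv C \<psi> \<theta> = cid C (ccod C \<theta>))"

definition iso_mor :: "('o,'m,'c) twocat \<Rightarrow> 'm \<Rightarrow> 'm \<Rightarrow> bool" where
  "iso_mor C f g \<longleftrightarrow> (\<exists>\<theta>. is_cell C \<theta> f g \<and> invertible_cell C \<theta>)"

definition equivalence :: "('o,'m,'c) twocat \<Rightarrow> 'm \<Rightarrow> bool" where
  "equivalence C f \<longleftrightarrow> f \<in> TMor C \<and>
     (\<exists>g. is_mor C g (mcod C f) (mdom C f) \<and>
          iso_mor C (mcomp C f g) (mid C (mdom C f)) \<and>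
          iso_mor C (mcomp C g f) (mid C (mcod C f)))"

definition biequivalence ::
  "('o1,'m1,'c1) twocat \<Rightarrow> ('o2,'m2,'c2) twocat \<Rightarrow> ('o1,'m1,'c1,'o2,'m2,'c2) twofun \<Rightarrow> bool" where
  "biequivalence C D G \<longleftrightarrow>
   \<comment> \<open>essentially surjective up to equivalence on objects\<close>
   (\<forall>y\<in>TObj D. \<exists>x\<in>TObj C. \<exists>e. is_mor D e (G0 G x) y \<and> equivalence D e) \<and>
   \<comment> \<open>essentially full up to invertible 2-cell on morphisms\<close>
   (\<forall>x\<in>TObj C. \<forall>x'\<in>TObj C. \<forall>g. is_mor D g (G0 G x) (G0 G x') \<longrightarrow>
      (\<exists>f. is_mor C f x x' \<and> iso_mor D (G1 G f) g)) \<and>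
   \<comment> \<open>fully faithful on 2-cells\<close>
   (\<forall>f f' \<theta>. f \<in> TMor C \<longrightarrow> f' \<in> TMor C \<longrightarrow> mdom C f = mdom C f' \<longrightarrow> mcod C f = mcod C f' \<longrightarrow>
      is_cell D \<theta> (G1 G f) (G1 G f') \<longrightarrow> (\<exists>!\<phi>. is_cell C \<phi> f f' \<and> G2 G \<phi> = \<theta>))"

definition lack_fibration ::
  "('o1,'m1,'c1) twocat \<Rightarrow> ('o2,'m2,'c2) twocat \<Rightarrow> ('o1,'m1,'c1,'o2,'m2,'c2) twofun \<Rightarrow> bool" where
  "lack_fibration C D G \<longleftrightarrow>
   (\<forall>c\<in>TObj C. \<forall>b. b \<in> TMor D \<longrightarrow> mcod D b = G0 G c \<longrightarrow> equivalence D b \<longrightarrow>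
      (\<exists>a. a \<in> TMor C \<and> mcod C a = c \<and> equivalence C a \<and> G1 G a = b)) \<and>
   (\<forall>c\<in>TMor C. \<forall>\<beta>. \<beta> \<in> TCell D \<longrightarrow> ccod D \<beta> = G1 G c \<longrightarrow> invertible_cell D \<beta> \<longrightarrow>
      (\<exists>\<alpha>. \<alpha> \<in> TCell C \<and> ccod C \<alpha> = c \<and> invertible_cell C \<alpha> \<and> G2 G \<alpha> = \<beta>))"

definition lack_trivial_fibration ::
  "('o1,'m1,'c1) twocat \<Rightarrow> ('o2,'m2,'c2) twocat \<Rightarrow> ('o1,'m1,'c1,'o2,'m2,'c2) twofun \<Rightarrow> bool" where
  "lack_trivial_fibration C D G \<longleftrightarrow> biequivalence C D G \<and> lack_fibration C D G"

section \<open>The 2-categories H A and V A, and the induced 2-functors\<close>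

definition Hcat :: "('o,'h,'v,'s) dblcat \<Rightarrow> ('o,'h,'s) twocat" where
  "Hcat A = \<lparr> TObj = Obj A, TMor = Hor A,
     TCell = {\<sigma> \<in> Sq A. sleft A \<sigma> = vid A (hdom A (stop A \<sigma>)) \<and> sright A \<sigma> = vid A (hcod A (stop A \<sigma>))},
     mdom = hdom A, mcod = hcod A, mcomp = hcomp A, mid = hid A,
     cdom = stop A, ccod = sbot A, ccompv = svcomp A, ccomph = shcomp A, cid = svid A \<rparr>"

text \<open>A 2-cell of V A is recorded as a quadruple (\<alpha>, \<beta>, \<sigma>0, \<sigma>1): source, target, and the
  pair of globular squares.\<close>

definition Vcat :: "('o,'h,'v,'s) dblcat \<Rightarrow> ('v,'s,'s\<times>'s\<times>'s\<times>'s) twocat" where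
  "Vcat A = \<lparr> TObj = Ver A, TMor = Sq A,
     TCell = {(\<alpha>,\<beta>,\<sigma>0,\<sigma>1). \<alpha> \<in> Sq A \<and> \<beta> \<in> Sq A \<and> sleft A \<alpha> = sleft A \<beta> \<and> sright A \<alpha> = sright A \<beta> \<and>
        \<sigma>0 \<in> Sq A \<and> sleft A \<sigma>0 = vid A (hdom A (stop A \<alpha>)) \<and> sright A \<sigma>0 = vid A (hcod A (stop A \<alpha>)) \<and>
          stop A \<sigma>0 = stop A \<alpha> \<and> sbot A \<sigma>0 = stop A \<beta> \<and>
        \<sigma>1 \<in> Sq A \<and> sleft A \<sigma>1 = vid A (hdom A (sbot A \<alpha>)) \<and> sright A \<sigma>1 = vid A (hcod A (sbot A \<alpha>)) \<and>
          stop A \<sigma>1 = sbot A \<alpha> \<and> sbot A \<sigma>1 = sbot A \<beta> \<and>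
        svcomp A \<sigma>0 \<beta> = svcomp A \<alpha> \<sigma>1},
     mdom = sleft A, mcod = sright A, mcomp = shcomp A, mid = shid A,
     cdom = (\<lambda>(\<alpha>,\<beta>,\<sigma>0,\<sigma>1). \<alpha>), ccod = (\<lambda>(\<alpha>,\<beta>,\<sigma>0,\<sigma>1). \<beta>),
     ccompv = (\<lambda>(\<alpha>,\<beta>,\<sigma>0,\<sigma>1) (\<alpha>',\<beta>',\<tau>0,\<tau>1). (\<alpha>, \<beta>', svcomp A \<sigma>0 \<tau>0, svcomp A \<sigma>1 \<tau>1)),
     ccomph = (\<lambda>(\<alpha>,\<beta>,\<sigma>0,\<sigma>1) (\<alpha>',\<beta>',\<tau>0,\<tau>1).
                 (shcomp A \<alpha> \<alpha>', shcomp A \<beta> \<beta>', shcomp A \<sigma>0 \<tau>0, shcomp A \<sigma>1 \<tau>1)),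
     cid = (\<lambda>\<alpha>. (\<alpha>, \<alpha>, svid A (stop A \<alpha>), svid A (sbot A \<alpha>))) \<rparr>"

definition Hfun :: "('o1,'h1,'v1,'s1,'o2,'h2,'v2,'s2) dblfun \<Rightarrow> ('o1,'h1,'s1,'o2,'h2,'s2) twofun" where
  "Hfun F = \<lparr> G0 = fO F, G1 = fH F, G2 = fS F \<rparr>"

definition Vfun :: "('o1,'h1,'v1,'s1,'o2,'h2,'v2,'s2) dblfun \<Rightarrow>
    ('v1,'s1,'s1\<times>'s1\<times>'s1\<times>'s1,'v2,'s2,'s2\<times>'s2\<times>'s2\<times>'s2) twofun" where
  "Vfun F = \<lparr> G0 = fV F, G1 = fS F,
     G2 = (\<lambda>(\<alpha>,\<beta>,\<sigma>0,\<sigma>1). (fS F \<alpha>, fS F \<beta>, fS F \<sigma>0, fS F \<sigma>1)) \<rparr>"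

end

theory Submission
  imports Defs
begin

text \<open>A 2-functor is a trivial fibration in the Lack model structure exactly when it is
  surjective on objects, full on morphisms and fully faithful on 2-cells: the lifting properties
  of a fibration make essential surjectivity and essential fullness strict, and conversely full
  faithfulness reflects invertible 2-cells and equivalences. For H F these conditions are (dt1),
  (dt2) and unique lifting of globular squares; for V F surjectivity on objects is (dt3), and
  given (dt2), condition (dt4) is equivalent to H F being fully faithful and V F being full and
  fully faithful.\<close>

section \<open>Trivial fibrations of 2-categories\<close>

definition is_unital_twocat :: "('o,'m,'c) twocat \<Rightarrow> bool" where
  "is_unital_twocat C \<longleftrightarrow>
   (\<forall>f\<in>TMor C. mdom C f \<in> TObj C \<and> mcod C f \<in> TObj C) \<and>
   (\<forall>x\<in>TObj C. is_mor C (mid C x) x x) \<and>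
   (\<forall>f\<in>TMor C. \<forall>g\<in>TMor C. mcod C f = mdom C g \<longrightarrow> is_mor C (mcomp C f g) (mdom C f) (mcod C g)) \<and>
   (\<forall>f\<in>TMor C. mcomp C (mid C (mdom C f)) f = f \<and> mcomp C f (mid C (mcod C f)) = f) \<and>
   (\<forall>\<theta>\<in>TCell C. cdom C \<theta> \<in> TMor C \<and> ccod C \<theta> \<in> TMor C \<and>
      mdom C (cdom C \<theta>) = mdom C (ccod C \<theta>) \<and> mcod C (cdom C \<theta>) = mcod C (ccod C \<theta>)) \<and>
   (\<forall>f\<in>TMor C. is_cell C (cid C f) f f) \<and>
   (\<forall>\<theta>\<in>TCell C. \<forall>\<psi>\<in>TCell C. ccod C \<theta> = cdom C \<psi> \<longrightarrow>
      is_cell C (ccompv C \<theta> \<psi>) (cdom C \<theta>) (ccod C \<psi>)) \<and>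
   (\<forall>\<theta>\<in>TCell C. ccompv C (cid C (cdom C \<theta>)) \<theta> = \<theta> \<and> ccompv C \<theta> (cid C (ccod C \<theta>)) = \<theta>)"

definition is_twofun ::
  "('o1,'m1,'c1) twocat \<Rightarrow> ('o2,'m2,'c2) twocat \<Rightarrow> ('o1,'m1,'c1,'o2,'m2,'c2) twofun \<Rightarrow> bool" where
  "is_twofun C D G \<longleftrightarrow>
   (\<forall>x\<in>TObj C. G0 G x \<in> TObj D) \<and>
   (\<forall>f\<in>TMor C. is_mor D (G1 G f) (G0 G (mdom C f)) (G0 G (mcod C f))) \<and>
   (\<forall>\<theta>\<in>TCell C. is_cell D (G2 G \<theta>) (G1 G (cdom C \<theta>)) (G1 G (ccod C \<theta>))) \<and>
   (\<forall>x\<in>TObj C. G1 G (mid C x) = mid D (G0 G x)) \<and>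
   (\<forall>f\<in>TMor C. \<forall>g\<in>TMor C. mcod C f = mdom C g \<longrightarrow> G1 G (mcomp C f g) = mcomp D (G1 G f) (G1 G g)) \<and>
   (\<forall>f\<in>TMor C. G2 G (cid C f) = cid D (G1 G f)) \<and>
   (\<forall>\<theta>\<in>TCell C. \<forall>\<psi>\<in>TCell C. ccod C \<theta> = cdom C \<psi> \<longrightarrow>
      G2 G (ccompv C \<theta> \<psi>) = ccompv D (G2 G \<theta>) (G2 G \<psi>))"

definition surjective_on_objects ::
  "('o1,'m1,'c1) twocat \<Rightarrow> ('o2,'m2,'c2) twocat \<Rightarrow> ('o1,'m1,'c1,'o2,'m2,'c2) twofun \<Rightarrow> bool" where
  "surjective_on_objects C D G \<longleftrightarrow> (\<forall>y\<in>TObj D. \<exists>x\<in>TObj C. G0 G x = y)"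

definition full_on_morphisms ::
  "('o1,'m1,'c1) twocat \<Rightarrow> ('o2,'m2,'c2) twocat \<Rightarrow> ('o1,'m1,'c1,'o2,'m2,'c2) twofun \<Rightarrow> bool" where
  "full_on_morphisms C D G \<longleftrightarrow>
   (\<forall>x\<in>TObj C. \<forall>x'\<in>TObj C. \<forall>g. is_mor D g (G0 G x) (G0 G x') \<longrightarrow> (\<exists>f. is_mor C f x x' \<and> G1 G f = g))"

definition fully_faithful_on_cells ::
  "('o1,'m1,'c1) twocat \<Rightarrow> ('o2,'m2,'c2) twocat \<Rightarrow> ('o1,'m1,'c1,'o2,'m2,'c2) twofun \<Rightarrow> bool" where
  "fully_faithful_on_cells C D G \<longleftrightarrow>
   (\<forall>f f' \<theta>. f \<in> TMor C \<longrightarrow> f' \<in> TMor C \<longrightarrow> mdom C f = mdom C f' \<longrightarrow> mcod C f = mcod C f' \<longrightarrow>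
      is_cell D \<theta> (G1 G f) (G1 G f') \<longrightarrow> (\<exists>!\<phi>. is_cell C \<phi> f f' \<and> G2 G \<phi> = \<theta>))"

lemma invertible_cellI:
  assumes "is_cell C \<theta> f g" "is_cell C \<psi> g f" "ccompv C \<theta> \<psi> = cid C f" "ccompv C \<psi> \<theta> = cid C g"
  shows "invertible_cell C \<theta>"
  using assms unfolding invertible_cell_def is_cell_def by auto

lemma invertible_cellE:
  assumes "invertible_cell C \<theta>" "is_cell C \<theta> f g"
  obtains \<psi> where "is_cell C \<psi> g f" "ccompv C \<theta> \<psi> = cid C f" "ccompv C \<psi> \<theta> = cid C g"
    "invertible_cell C \<psi>"
  using assms unfolding invertible_cell_def is_cell_def by auto

lemma iso_mor_refl:
  assumes "is_unital_twocat C" "f \<in> TMor C"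
  shows "iso_mor C f f"
proof -
  have "is_cell C (cid C f) f f" "ccompv C (cid C f) (cid C f) = cid C f"
    using assms unfolding is_unital_twocat_def is_cell_def by metis+
  then show ?thesis
    unfolding iso_mor_def by (blast intro: invertible_cellI)
qed

lemma equivalence_mid:
  assumes "is_unital_twocat C" "x \<in> TObj C"
  shows "equivalence C (mid C x)"
proof -
  have "is_mor C (mid C x) x x" "mcomp C (mid C x) (mid C x) = mid C x"
    using assms unfolding is_unital_twocat_def is_mor_def by metis+
  with iso_mor_refl[OF assms(1)] show ?thesis
    unfolding equivalence_def is_mor_def by metis
qed


text \<open>The inverse of G \<phi> lifts, and its two composites with \<phi> are identities because they
  map to identities.\<close>

lemma fully_faithful_reflects_invertible_cell:
  assumes C: "is_unital_twocat C" and D: "is_unital_twocat D" and G: "is_twofun C D G"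
    and ff: "fully_faithful_on_cells C D G"
    and \<phi>: "is_cell C \<phi> f f'" and inv: "invertible_cell D (G2 G \<phi>)"
  shows "invertible_cell C \<phi>"
proof -
  have G\<phi>: "is_cell D (G2 G \<phi>) (G1 G f) (G1 G f')"
    using G \<phi> unfolding is_twofun_def is_cell_def by auto
  obtain \<psi>' where \<psi>': "is_cell D \<psi>' (G1 G f') (G1 G f)"
    "ccompv D (G2 G \<phi>) \<psi>' = cid D (G1 G f)" "ccompv D \<psi>' (G2 G \<phi>) = cid D (G1 G f')"
    using invertible_cellE[OF inv G\<phi>] by metis
  have f: "f \<in> TMor C" "f' \<in> TMor C" "mdom C f' = mdom C f" "mcod C f' = mcod C f"
    using C \<phi> unfolding is_unital_twocat_def is_cell_def by auto
  then obtain \<psi> where \<psi>: "is_cell C \<psi> f' f" "G2 G \<psi> = \<psi>'"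
    using ff \<psi>'(1) unfolding fully_faithful_on_cells_def by metis
  have cells: "is_cell C (ccompv C \<phi> \<psi>) f f" "is_cell C (ccompv C \<psi> \<phi>) f' f'"
    "is_cell C (cid C f) f f" "is_cell C (cid C f') f' f'"
    using C \<phi> \<psi> f unfolding is_unital_twocat_def is_cell_def by auto
  have images: "G2 G (ccompv C \<phi> \<psi>) = cid D (G1 G f)" "G2 G (ccompv C \<psi> \<phi>) = cid D (G1 G f')"
    "G2 G (cid C f) = cid D (G1 G f)" "G2 G (cid C f') = cid D (G1 G f')"
    using G \<phi> \<psi> \<psi>' f unfolding is_twofun_def is_cell_def by auto
  have "is_cell D (cid D (G1 G f)) (G1 G f) (G1 G f)" "is_cell D (cid D (G1 G f')) (G1 G f') (G1 G f')"
    using cells(3,4) images(3,4) G unfolding is_twofun_def is_cell_def by auto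
  then have "ccompv C \<phi> \<psi> = cid C f" "ccompv C \<psi> \<phi> = cid C f'"
    using ff f cells images unfolding fully_faithful_on_cells_def by (metis (no_types, lifting))+
  then show ?thesis
    using \<phi> \<psi> by (blast intro: invertible_cellI)
qed

lemma fully_faithful_reflects_iso_mor:
  assumes C: "is_unital_twocat C" and D: "is_unital_twocat D" and G: "is_twofun C D G"
    and ff: "fully_faithful_on_cells C D G"
    and f: "f \<in> TMor C" "f' \<in> TMor C" "mdom C f = mdom C f'" "mcod C f = mcod C f'"
    and iso: "iso_mor D (G1 G f) (G1 G f')"
  shows "iso_mor C f f'"
proof -
  obtain \<theta> where \<theta>: "is_cell D \<theta> (G1 G f) (G1 G f')" "invertible_cell D \<theta>"
    using iso unfolding iso_mor_def by blast
  then obtain \<phi> where \<phi>: "is_cell C \<phi> f f'" "G2 G \<phi> = \<theta>"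
    using ff f unfolding fully_faithful_on_cells_def by metis
  then have "invertible_cell C \<phi>"
    using fully_faithful_reflects_invertible_cell[OF C D G ff] \<theta> by blast
  with \<phi> show ?thesis
    unfolding iso_mor_def by blast
qed

lemma full_fully_faithful_reflects_equivalence:
  assumes C: "is_unital_twocat C" and D: "is_unital_twocat D" and G: "is_twofun C D G"
    and full: "full_on_morphisms C D G" and ff: "fully_faithful_on_cells C D G"
    and f: "is_mor C f x y" and eq: "equivalence D (G1 G f)"
  shows "equivalence C f"
proof -
  have xy: "x \<in> TObj C" "y \<in> TObj C"
    using C f unfolding is_unital_twocat_def is_mor_def by auto
  have "is_mor D (G1 G f) (G0 G x) (G0 G y)"
    using G f unfolding is_twofun_def is_mor_def by auto
  then obtain g' where g': "is_mor D g' (G0 G y) (G0 G x)"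
    "iso_mor D (mcomp D (G1 G f) g') (mid D (G0 G x))"
    "iso_mor D (mcomp D g' (G1 G f)) (mid D (G0 G y))"
    using eq unfolding equivalence_def is_mor_def by auto
  then obtain g where g: "is_mor C g y x" "G1 G g = g'"
    using full xy unfolding full_on_morphisms_def by blast
  have composites: "is_mor C (mcomp C f g) x x" "is_mor C (mcomp C g f) y y"
    "is_mor C (mid C x) x x" "is_mor C (mid C y) y y"
    using C f g xy unfolding is_unital_twocat_def is_mor_def by auto
  have "G1 G (mcomp C f g) = mcomp D (G1 G f) g'" "G1 G (mcomp C g f) = mcomp D g' (G1 G f)"
    "G1 G (mid C x) = mid D (G0 G x)" "G1 G (mid C y) = mid D (G0 G y)"
    using G f g xy unfolding is_twofun_def is_mor_def by auto
  then have "iso_mor C (mcomp C f g) (mid C x)" "iso_mor C (mcomp C g f) (mid C y)"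
    using fully_faithful_reflects_iso_mor[OF C D G ff] composites g' unfolding is_mor_def by auto
  with f g show ?thesis
    unfolding equivalence_def is_mor_def by auto
qed

lemma lack_trivial_fibration_imp_surjective_on_objects:
  assumes C: "is_unital_twocat C" and G: "is_twofun C D G"
    and "lack_trivial_fibration C D G"
  shows "surjective_on_objects C D G"
  unfolding surjective_on_objects_def
proof
  fix y assume "y \<in> TObj D"
  then obtain x e where x: "x \<in> TObj C" and e: "is_mor D e (G0 G x) y" "equivalence D e"
    using assms(3) unfolding lack_trivial_fibration_def biequivalence_def by blast
  then obtain e' where e': "is_mor D e' y (G0 G x)" "equivalence D e'"
    unfolding equivalence_def is_mor_def by metis
  then obtain a where "a \<in> TMor C" "mcod C a = x" "G1 G a = e'"
    using assms(3) x unfolding lack_trivial_fibration_def lack_fibration_def is_mor_def by blast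
  with C G e' have "mdom C a \<in> TObj C" "G0 G (mdom C a) = y"
    unfolding is_unital_twocat_def is_twofun_def is_mor_def by auto
  then show "\<exists>x\<in>TObj C. G0 G x = y" ..
qed

text \<open>A morphism g is isomorphic to some G f; lifting the inverse 2-cell g \<Rightarrow> G f along
  the fibration gives a morphism whose image is g itself.\<close>

lemma lack_trivial_fibration_imp_full_on_morphisms:
  assumes C: "is_unital_twocat C" and G: "is_twofun C D G"
    and "lack_trivial_fibration C D G"
  shows "full_on_morphisms C D G"
  unfolding full_on_morphisms_def
proof (intro ballI allI impI)
  fix x x' g assume x: "x \<in> TObj C" "x' \<in> TObj C" and g: "is_mor D g (G0 G x) (G0 G x')"
  obtain f \<theta> where f: "is_mor C f x x'" and \<theta>: "is_cell D \<theta> (G1 G f) g" "invertible_cell D \<theta>"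
    using assms(3) x g unfolding lack_trivial_fibration_def biequivalence_def iso_mor_def by blast
  obtain \<psi> where \<psi>: "is_cell D \<psi> g (G1 G f)" "invertible_cell D \<psi>"
    using invertible_cellE[OF \<theta>(2,1)] by metis
  then obtain \<alpha> where \<alpha>: "\<alpha> \<in> TCell C" "ccod C \<alpha> = f" "G2 G \<alpha> = \<psi>"
    using assms(3) f unfolding lack_trivial_fibration_def lack_fibration_def is_mor_def is_cell_def
    by blast
  with C G f \<psi>(1) have "is_mor C (cdom C \<alpha>) x x'" "G1 G (cdom C \<alpha>) = g"
    unfolding is_unital_twocat_def is_twofun_def is_mor_def is_cell_def by auto
  then show "\<exists>f. is_mor C f x x' \<and> G1 G f = g" by blast
qed

lemma lack_trivial_fibration_imp_fully_faithful_on_cells: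
  assumes "lack_trivial_fibration C D G"
  shows "fully_faithful_on_cells C D G"
  using assms unfolding lack_trivial_fibration_def biequivalence_def fully_faithful_on_cells_def by blast

lemma biequivalence_if_surjective_full_fully_faithful:
  assumes D: "is_unital_twocat D"
    and "surjective_on_objects C D G" "full_on_morphisms C D G" "fully_faithful_on_cells C D G"
  shows "biequivalence C D G"
  unfolding biequivalence_def
proof (intro conjI ballI allI impI)
  fix y assume y: "y \<in> TObj D"
  then obtain x where "x \<in> TObj C" "G0 G x = y"
    using assms(2) unfolding surjective_on_objects_def by blast
  moreover have "is_mor D (mid D y) y y"
    using D y unfolding is_unital_twocat_def by blast
  ultimately show "\<exists>x\<in>TObj C. \<exists>e. is_mor D e (G0 G x) y \<and> equivalence D e"
    using equivalence_mid[OF D y] by blast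
next
  fix x x' g assume "x \<in> TObj C" "x' \<in> TObj C" and g: "is_mor D g (G0 G x) (G0 G x')"
  then obtain f where "is_mor C f x x'" "G1 G f = g"
    using assms(3) unfolding full_on_morphisms_def by blast
  then show "\<exists>f. is_mor C f x x' \<and> iso_mor D (G1 G f) g"
    using iso_mor_refl[OF D] g unfolding is_mor_def by blast
qed (use assms(4) in \<open>unfold fully_faithful_on_cells_def, blast\<close>)

lemma lack_fibration_if_surjective_full_fully_faithful:
  assumes C: "is_unital_twocat C" and D: "is_unital_twocat D" and G: "is_twofun C D G"
    and surj: "surjective_on_objects C D G" and full: "full_on_morphisms C D G"
    and ff: "fully_faithful_on_cells C D G"
  shows "lack_fibration C D G"
  unfolding lack_fibration_def
proof (intro conjI ballI allI impI)
  fix c b assume c: "c \<in> TObj C" and b: "b \<in> TMor D" "mcod D b = G0 G c" "equivalence D b"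
  obtain x where x: "x \<in> TObj C" "G0 G x = mdom D b"
    using surj D b(1) unfolding surjective_on_objects_def is_unital_twocat_def by metis
  then obtain a where a: "is_mor C a x c" "G1 G a = b"
    using full c b unfolding full_on_morphisms_def is_mor_def by metis
  then have "equivalence C a"
    using full_fully_faithful_reflects_equivalence[OF C D G full ff] b(3) by blast
  with a show "\<exists>a. a \<in> TMor C \<and> mcod C a = c \<and> equivalence C a \<and> G1 G a = b"
    unfolding is_mor_def by blast
next
  fix c \<beta> assume c: "c \<in> TMor C"
    and \<beta>: "\<beta> \<in> TCell D" "ccod D \<beta> = G1 G c" "invertible_cell D \<beta>"
  have "is_mor D (cdom D \<beta>) (G0 G (mdom C c)) (G0 G (mcod C c))"
    using D G c \<beta> unfolding is_unital_twocat_def is_twofun_def is_mor_def by auto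
  moreover have "mdom C c \<in> TObj C" "mcod C c \<in> TObj C"
    using C c unfolding is_unital_twocat_def by auto
  ultimately obtain a where a: "is_mor C a (mdom C c) (mcod C c)" "G1 G a = cdom D \<beta>"
    using full unfolding full_on_morphisms_def by blast
  then obtain \<alpha> where \<alpha>: "is_cell C \<alpha> a c" "G2 G \<alpha> = \<beta>"
    using ff c \<beta> unfolding fully_faithful_on_cells_def is_mor_def is_cell_def by metis
  then have "invertible_cell C \<alpha>"
    using fully_faithful_reflects_invertible_cell[OF C D G ff] \<beta>(3) by blast
  with \<alpha> show "\<exists>\<alpha>. \<alpha> \<in> TCell C \<and> ccod C \<alpha> = c \<and> invertible_cell C \<alpha> \<and> G2 G \<alpha> = \<beta>"
    unfolding is_cell_def by blast
qed

lemma lack_trivial_fibration_iff: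
  assumes "is_unital_twocat C" "is_unital_twocat D" "is_twofun C D G"
  shows "lack_trivial_fibration C D G \<longleftrightarrow>
    surjective_on_objects C D G \<and> full_on_morphisms C D G \<and> fully_faithful_on_cells C D G"
  using assms lack_trivial_fibration_imp_surjective_on_objects
    lack_trivial_fibration_imp_full_on_morphisms lack_trivial_fibration_imp_fully_faithful_on_cells
    biequivalence_if_surjective_full_fully_faithful lack_fibration_if_surjective_full_fully_faithful
  unfolding lack_trivial_fibration_def by blast

section \<open>Double categories and their 2-categories H and V\<close>

locale double_category =
  fixes A :: "('o,'h,'v,'s) dblcat"
  assumes is_dblcat: "is_dblcat A"
begin

lemmas dblcat_laws = is_dblcat[unfolded is_dblcat_def]

lemma Hor_dom_cod [simp]:
  assumes "a \<in> Hor A" shows "hdom A a \<in> Obj A" "hcod A a \<in> Obj A"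
  using assms by (simp_all add: dblcat_laws)

lemma hid_typing [simp]:
  assumes "x \<in> Obj A" shows "hid A x \<in> Hor A" "hdom A (hid A x) = x" "hcod A (hid A x) = x"
  using assms by (simp_all add: dblcat_laws)

lemma hcomp_typing [simp]:
  assumes "a \<in> Hor A" "b \<in> Hor A" "hcod A a = hdom A b"
  shows "hcomp A a b \<in> Hor A" "hdom A (hcomp A a b) = hdom A a" "hcod A (hcomp A a b) = hcod A b"
  using assms by (simp_all add: dblcat_laws)

lemma hcomp_hid [simp]:
  assumes "a \<in> Hor A" shows "hcomp A (hid A (hdom A a)) a = a" "hcomp A a (hid A (hcod A a)) = a"
  using assms by (simp_all add: dblcat_laws)

lemma Ver_dom_cod [simp]:
  assumes "u \<in> Ver A" shows "vdom A u \<in> Obj A" "vcod A u \<in> Obj A"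
  using assms by (simp_all add: dblcat_laws)

lemma vid_typing [simp]:
  assumes "x \<in> Obj A" shows "vid A x \<in> Ver A" "vdom A (vid A x) = x" "vcod A (vid A x) = x"
  using assms by (simp_all add: dblcat_laws)

lemma vcomp_vid [simp]:
  assumes "u \<in> Ver A" shows "vcomp A (vid A (vdom A u)) u = u" "vcomp A u (vid A (vcod A u)) = u"
  using assms by (simp_all add: dblcat_laws)

lemma vcomp_vid_vid [simp]: "x \<in> Obj A \<Longrightarrow> vcomp A (vid A x) (vid A x) = vid A x"
  using vcomp_vid(1)[of "vid A x"] by simp

lemma Sq_boundary [simp]:
  assumes "\<alpha> \<in> Sq A"
  shows "stop A \<alpha> \<in> Hor A" "sbot A \<alpha> \<in> Hor A" "sleft A \<alpha> \<in> Ver A" "sright A \<alpha> \<in> Ver A"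
  using assms by (simp_all add: dblcat_laws)

lemma Sq_corners:
  assumes "\<alpha> \<in> Sq A"
  shows "hdom A (stop A \<alpha>) = vdom A (sleft A \<alpha>)" "hcod A (stop A \<alpha>) = vdom A (sright A \<alpha>)"
    "hdom A (sbot A \<alpha>) = vcod A (sleft A \<alpha>)" "hcod A (sbot A \<alpha>) = vcod A (sright A \<alpha>)"
  using assms by (simp_all add: dblcat_laws)

lemma shcomp_typing [simp]:
  assumes "\<alpha> \<in> Sq A" "\<beta> \<in> Sq A" "sright A \<alpha> = sleft A \<beta>"
  shows "shcomp A \<alpha> \<beta> \<in> Sq A" "sleft A (shcomp A \<alpha> \<beta>) = sleft A \<alpha>"
    "sright A (shcomp A \<alpha> \<beta>) = sright A \<beta>"
    "stop A (shcomp A \<alpha> \<beta>) = hcomp A (stop A \<alpha>) (stop A \<beta>)"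
    "sbot A (shcomp A \<alpha> \<beta>) = hcomp A (sbot A \<alpha>) (sbot A \<beta>)"
  using assms by (simp_all add: dblcat_laws)

lemma shid_typing [simp]:
  assumes "u \<in> Ver A"
  shows "shid A u \<in> Sq A" "sleft A (shid A u) = u" "sright A (shid A u) = u"
    "stop A (shid A u) = hid A (vdom A u)" "sbot A (shid A u) = hid A (vcod A u)"
  using assms by (simp_all add: dblcat_laws)

lemma shcomp_shid [simp]:
  assumes "\<alpha> \<in> Sq A"
  shows "shcomp A (shid A (sleft A \<alpha>)) \<alpha> = \<alpha>" "shcomp A \<alpha> (shid A (sright A \<alpha>)) = \<alpha>"
  using assms by (simp_all add: dblcat_laws)

lemma svcomp_typing [simp]:
  assumes "\<alpha> \<in> Sq A" "\<beta> \<in> Sq A" "sbot A \<alpha> = stop A \<beta>"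
  shows "svcomp A \<alpha> \<beta> \<in> Sq A" "stop A (svcomp A \<alpha> \<beta>) = stop A \<alpha>" "sbot A (svcomp A \<alpha> \<beta>) = sbot A \<beta>"
    "sleft A (svcomp A \<alpha> \<beta>) = vcomp A (sleft A \<alpha>) (sleft A \<beta>)"
    "sright A (svcomp A \<alpha> \<beta>) = vcomp A (sright A \<alpha>) (sright A \<beta>)"
  using assms by (simp_all add: dblcat_laws)

lemma svid_typing [simp]:
  assumes "a \<in> Hor A"
  shows "svid A a \<in> Sq A" "stop A (svid A a) = a" "sbot A (svid A a) = a"
    "sleft A (svid A a) = vid A (hdom A a)" "sright A (svid A a) = vid A (hcod A a)"
  using assms by (simp_all add: dblcat_laws)

lemma svcomp_svid [simp]:
  assumes "\<alpha> \<in> Sq A"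
  shows "svcomp A (svid A (stop A \<alpha>)) \<alpha> = \<alpha>" "svcomp A \<alpha> (svid A (sbot A \<alpha>)) = \<alpha>"
  using assms by (simp_all add: dblcat_laws)

lemma svcomp_assoc:
  assumes "\<alpha> \<in> Sq A" "\<beta> \<in> Sq A" "\<gamma> \<in> Sq A" "sbot A \<alpha> = stop A \<beta>" "sbot A \<beta> = stop A \<gamma>"
  shows "svcomp A (svcomp A \<alpha> \<beta>) \<gamma> = svcomp A \<alpha> (svcomp A \<beta> \<gamma>)"
  using assms by (simp add: dblcat_laws)

lemma globular_parallel:
  assumes "\<sigma> \<in> Sq A" "sleft A \<sigma> = vid A (hdom A (stop A \<sigma>))" "sright A \<sigma> = vid A (hcod A (stop A \<sigma>))"
  shows "hdom A (sbot A \<sigma>) = hdom A (stop A \<sigma>)" "hcod A (sbot A \<sigma>) = hcod A (stop A \<sigma>)"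
  using assms Sq_boundary[OF assms(1)] Sq_corners[OF assms(1)] vid_typing[of "hdom A (stop A \<sigma>)"] vid_typing[of "hcod A (stop A \<sigma>)"]
  by (metis Hor_dom_cod)+

lemma Hcat_simps [simp]:
  "TObj (Hcat A) = Obj A" "TMor (Hcat A) = Hor A"
  "TCell (Hcat A) = {\<sigma> \<in> Sq A. sleft A \<sigma> = vid A (hdom A (stop A \<sigma>)) \<and> sright A \<sigma> = vid A (hcod A (stop A \<sigma>))}"
  "mdom (Hcat A) = hdom A" "mcod (Hcat A) = hcod A" "mcomp (Hcat A) = hcomp A" "mid (Hcat A) = hid A"
  "cdom (Hcat A) = stop A" "ccod (Hcat A) = sbot A" "ccompv (Hcat A) = svcomp A" "cid (Hcat A) = svid A"
  by (simp_all add: Hcat_def)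

lemma is_cell_Hcat_iff:
  "is_cell (Hcat A) \<sigma> f f' \<longleftrightarrow>
   \<sigma> \<in> Sq A \<and> sleft A \<sigma> = vid A (hdom A f) \<and> sright A \<sigma> = vid A (hcod A f) \<and> stop A \<sigma> = f \<and> sbot A \<sigma> = f'"
  unfolding is_cell_def by auto

lemma unital_twocat_Hcat: "is_unital_twocat (Hcat A)"
  unfolding is_unital_twocat_def is_mor_def is_cell_def
  by (auto simp: globular_parallel simp flip: Sq_corners)
    (metis globular_parallel vcomp_vid_vid Hor_dom_cod Sq_boundary(1))+


lemma Vcat_simps [simp]:
  "TObj (Vcat A) = Ver A" "TMor (Vcat A) = Sq A"
  "mdom (Vcat A) = sleft A" "mcod (Vcat A) = sright A" "mcomp (Vcat A) = shcomp A" "mid (Vcat A) = shid A"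
  "cdom (Vcat A) (\<alpha>,\<beta>,\<sigma>0,\<sigma>1) = \<alpha>" "ccod (Vcat A) (\<alpha>,\<beta>,\<sigma>0,\<sigma>1) = \<beta>"
  "ccompv (Vcat A) (\<alpha>,\<beta>,\<sigma>0,\<sigma>1) (\<alpha>',\<beta>',\<tau>0,\<tau>1) = (\<alpha>, \<beta>', svcomp A \<sigma>0 \<tau>0, svcomp A \<sigma>1 \<tau>1)"
  "cid (Vcat A) \<alpha> = (\<alpha>, \<alpha>, svid A (stop A \<alpha>), svid A (sbot A \<alpha>))"
  by (simp_all add: Vcat_def)

lemma TCell_Vcat_iff:
  "(\<alpha>,\<beta>,\<sigma>0,\<sigma>1) \<in> TCell (Vcat A) \<longleftrightarrow>
   \<alpha> \<in> Sq A \<and> \<beta> \<in> Sq A \<and> sleft A \<alpha> = sleft A \<beta> \<and> sright A \<alpha> = sright A \<beta> \<and>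
   \<sigma>0 \<in> Sq A \<and> sleft A \<sigma>0 = vid A (hdom A (stop A \<alpha>)) \<and> sright A \<sigma>0 = vid A (hcod A (stop A \<alpha>)) \<and>
     stop A \<sigma>0 = stop A \<alpha> \<and> sbot A \<sigma>0 = stop A \<beta> \<and>
   \<sigma>1 \<in> Sq A \<and> sleft A \<sigma>1 = vid A (hdom A (sbot A \<alpha>)) \<and> sright A \<sigma>1 = vid A (hcod A (sbot A \<alpha>)) \<and>
     stop A \<sigma>1 = sbot A \<alpha> \<and> sbot A \<sigma>1 = sbot A \<beta> \<and>
   svcomp A \<sigma>0 \<beta> = svcomp A \<alpha> \<sigma>1"
  by (simp add: Vcat_def)

lemma parallel_Sq_boundary:
  assumes "\<alpha> \<in> Sq A" "\<beta> \<in> Sq A" "sleft A \<alpha> = sleft A \<beta>" "sright A \<alpha> = sright A \<beta>"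
  shows "hdom A (stop A \<beta>) = hdom A (stop A \<alpha>)" "hcod A (stop A \<beta>) = hcod A (stop A \<alpha>)"
    "hdom A (sbot A \<beta>) = hdom A (sbot A \<alpha>)" "hcod A (sbot A \<beta>) = hcod A (sbot A \<alpha>)"
  using assms by (simp_all add: Sq_corners)

lemma TCell_Vcat_cid:
  assumes "\<alpha> \<in> Sq A"
  shows "(\<alpha>, \<alpha>, svid A (stop A \<alpha>), svid A (sbot A \<alpha>)) \<in> TCell (Vcat A)"
  using assms by (simp add: TCell_Vcat_iff)

lemma TCell_Vcat_ccompv:
  assumes \<sigma>: "(\<alpha>,\<beta>,\<sigma>0,\<sigma>1) \<in> TCell (Vcat A)" and \<tau>: "(\<beta>,\<gamma>,\<tau>0,\<tau>1) \<in> TCell (Vcat A)"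
  shows "(\<alpha>, \<gamma>, svcomp A \<sigma>0 \<tau>0, svcomp A \<sigma>1 \<tau>1) \<in> TCell (Vcat A)"
proof -
  note s = \<sigma>[unfolded TCell_Vcat_iff] and t = \<tau>[unfolded TCell_Vcat_iff]
  have "svcomp A (svcomp A \<sigma>0 \<tau>0) \<gamma> = svcomp A \<sigma>0 (svcomp A \<beta> \<tau>1)"
    using s t by (simp add: svcomp_assoc)
  also have "\<dots> = svcomp A \<alpha> (svcomp A \<sigma>1 \<tau>1)"
    using s t by (metis svcomp_assoc)
  moreover have "hdom A (stop A \<beta>) = hdom A (stop A \<alpha>)" "hcod A (stop A \<beta>) = hcod A (stop A \<alpha>)"
    "hdom A (sbot A \<beta>) = hdom A (sbot A \<alpha>)" "hcod A (sbot A \<beta>) = hcod A (sbot A \<alpha>)"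
    using s by (simp_all add: parallel_Sq_boundary)
  ultimately show ?thesis
    using s t by (simp add: TCell_Vcat_iff)
qed

lemma unital_twocat_Vcat: "is_unital_twocat (Vcat A)"
  unfolding is_unital_twocat_def is_mor_def is_cell_def
  by (auto simp: TCell_Vcat_cid TCell_Vcat_ccompv) (auto simp: TCell_Vcat_iff, (metis svcomp_svid)+)

end

section \<open>Double trivial fibrations\<close>

locale double_functor = A: double_category A + B: double_category B
  for A :: "('o1,'h1,'v1,'s1) dblcat" and B :: "('o2,'h2,'v2,'s2) dblcat" +
  fixes F :: "('o1,'h1,'v1,'s1,'o2,'h2,'v2,'s2) dblfun"
  assumes is_dblfun: "is_dblfun A B F"
begin

lemmas dblfun_laws = is_dblfun[unfolded is_dblfun_def]

lemma fO_Obj [simp]: "x \<in> Obj A \<Longrightarrow> fO F x \<in> Obj B"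
  by (simp add: dblfun_laws)

lemma fH_typing [simp]:
  assumes "a \<in> Hor A"
  shows "fH F a \<in> Hor B" "hdom B (fH F a) = fO F (hdom A a)" "hcod B (fH F a) = fO F (hcod A a)"
  using assms by (simp_all add: dblfun_laws)

lemma fV_typing [simp]:
  assumes "u \<in> Ver A"
  shows "fV F u \<in> Ver B" "vdom B (fV F u) = fO F (vdom A u)" "vcod B (fV F u) = fO F (vcod A u)"
  using assms by (simp_all add: dblfun_laws)

lemma fS_typing [simp]:
  assumes "\<alpha> \<in> Sq A"
  shows "fS F \<alpha> \<in> Sq B" "stop B (fS F \<alpha>) = fH F (stop A \<alpha>)" "sbot B (fS F \<alpha>) = fH F (sbot A \<alpha>)"
    "sleft B (fS F \<alpha>) = fV F (sleft A \<alpha>)" "sright B (fS F \<alpha>) = fV F (sright A \<alpha>)"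
  using assms by (simp_all add: dblfun_laws)

lemma fH_hid [simp]: "x \<in> Obj A \<Longrightarrow> fH F (hid A x) = hid B (fO F x)"
  and fV_vid [simp]: "x \<in> Obj A \<Longrightarrow> fV F (vid A x) = vid B (fO F x)"
  by (simp_all add: dblfun_laws)

lemma fH_hcomp [simp]:
  "a \<in> Hor A \<Longrightarrow> b \<in> Hor A \<Longrightarrow> hcod A a = hdom A b \<Longrightarrow> fH F (hcomp A a b) = hcomp B (fH F a) (fH F b)"
  by (simp add: dblfun_laws)

lemma fS_shid [simp]: "u \<in> Ver A \<Longrightarrow> fS F (shid A u) = shid B (fV F u)"
  and fS_svid [simp]: "a \<in> Hor A \<Longrightarrow> fS F (svid A a) = svid B (fH F a)"
  by (simp_all add: dblfun_laws)

lemma fS_shcomp [simp]: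
  "\<alpha> \<in> Sq A \<Longrightarrow> \<beta> \<in> Sq A \<Longrightarrow> sright A \<alpha> = sleft A \<beta> \<Longrightarrow> fS F (shcomp A \<alpha> \<beta>) = shcomp B (fS F \<alpha>) (fS F \<beta>)"
  by (simp add: dblfun_laws)

lemma fS_svcomp [simp]:
  "\<alpha> \<in> Sq A \<Longrightarrow> \<beta> \<in> Sq A \<Longrightarrow> sbot A \<alpha> = stop A \<beta> \<Longrightarrow> fS F (svcomp A \<alpha> \<beta>) = svcomp B (fS F \<alpha>) (fS F \<beta>)"
  by (simp add: dblfun_laws)

lemma Hfun_simps [simp]: "G0 (Hfun F) = fO F" "G1 (Hfun F) = fH F" "G2 (Hfun F) = fS F"
  by (simp_all add: Hfun_def)

lemma Vfun_simps [simp]: "G0 (Vfun F) = fV F" "G1 (Vfun F) = fS F"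
  "G2 (Vfun F) (\<alpha>,\<beta>,\<sigma>0,\<sigma>1) = (fS F \<alpha>, fS F \<beta>, fS F \<sigma>0, fS F \<sigma>1)"
  by (simp_all add: Vfun_def)

lemma twofun_Hfun: "is_twofun (Hcat A) (Hcat B) (Hfun F)"
  unfolding is_twofun_def is_mor_def is_cell_def
  by (auto simp: A.globular_parallel)

lemma twofun_Vfun: "is_twofun (Vcat A) (Vcat B) (Vfun F)"
  unfolding is_twofun_def is_mor_def is_cell_def
  by (auto simp: A.TCell_Vcat_iff B.TCell_Vcat_iff) (metis fS_svcomp)

definition is_lift :: "'s1 \<Rightarrow> 'v1 \<Rightarrow> 'v1 \<Rightarrow> 'h1 \<Rightarrow> 'h1 \<Rightarrow> 's2 \<Rightarrow> bool" where
  "is_lift \<alpha> u u' a c \<beta> \<longleftrightarrow>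
   \<alpha> \<in> Sq A \<and> sleft A \<alpha> = u \<and> sright A \<alpha> = u' \<and> stop A \<alpha> = a \<and> sbot A \<alpha> = c \<and> fS F \<alpha> = \<beta>"

definition unique_square_lifting :: bool where
  "unique_square_lifting \<longleftrightarrow>
   (\<forall>u\<in>Ver A. \<forall>u'\<in>Ver A. \<forall>a\<in>Hor A. \<forall>c\<in>Hor A.
      hdom A a = vdom A u \<longrightarrow> hcod A a = vdom A u' \<longrightarrow> hdom A c = vcod A u \<longrightarrow> hcod A c = vcod A u' \<longrightarrow>
      (\<forall>\<beta>\<in>Sq B. sleft B \<beta> = fV F u \<longrightarrow> sright B \<beta> = fV F u' \<longrightarrow>
         stop B \<beta> = fH F a \<longrightarrow> sbot B \<beta> = fH F c \<longrightarrow> (\<exists>!\<alpha>. is_lift \<alpha> u u' a c \<beta>)))"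

lemma surjective_on_objects_Hfun_iff:
  "surjective_on_objects (Hcat A) (Hcat B) (Hfun F) \<longleftrightarrow> (\<forall>y\<in>Obj B. \<exists>x\<in>Obj A. fO F x = y)"
  unfolding surjective_on_objects_def by simp

lemma full_on_morphisms_Hfun_iff:
  "full_on_morphisms (Hcat A) (Hcat B) (Hfun F) \<longleftrightarrow>
   (\<forall>x\<in>Obj A. \<forall>z\<in>Obj A. \<forall>b\<in>Hor B. hdom B b = fO F x \<longrightarrow> hcod B b = fO F z \<longrightarrow>
      (\<exists>a\<in>Hor A. hdom A a = x \<and> hcod A a = z \<and> fH F a = b))"
  unfolding full_on_morphisms_def is_mor_def by simp blast

lemma surjective_on_objects_Vfun_iff:
  "surjective_on_objects (Vcat A) (Vcat B) (Vfun F) \<longleftrightarrow> (\<forall>v\<in>Ver B. \<exists>u\<in>Ver A. fV F u = v)"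
  unfolding surjective_on_objects_def by simp

lemma double_trivial_fibration_iff:
  "double_trivial_fibration A B F \<longleftrightarrow>
   surjective_on_objects (Hcat A) (Hcat B) (Hfun F) \<and> full_on_morphisms (Hcat A) (Hcat B) (Hfun F) \<and>
   surjective_on_objects (Vcat A) (Vcat B) (Vfun F) \<and> unique_square_lifting"
  unfolding double_trivial_fibration_def surjective_on_objects_Hfun_iff full_on_morphisms_Hfun_iff
    surjective_on_objects_Vfun_iff unique_square_lifting_def is_lift_def
  by (rule refl)

lemma unique_square_liftingE:
  assumes "unique_square_lifting" "u \<in> Ver A" "u' \<in> Ver A" "a \<in> Hor A" "c \<in> Hor A"
    "hdom A a = vdom A u" "hcod A a = vdom A u'" "hdom A c = vcod A u" "hcod A c = vcod A u'"
    "\<beta> \<in> Sq B" "sleft B \<beta> = fV F u" "sright B \<beta> = fV F u'" "stop B \<beta> = fH F a" "sbot B \<beta> = fH F c"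
  obtains \<alpha> where "is_lift \<alpha> u u' a c \<beta>"
  using assms unfolding unique_square_lifting_def by blast

lemma is_lift_unique:
  assumes "unique_square_lifting" "is_lift \<alpha> u u' a c \<beta>" "is_lift \<alpha>' u u' a c \<beta>"
  shows "\<alpha> = \<alpha>'"
proof -
  have "u \<in> Ver A" "u' \<in> Ver A" "a \<in> Hor A" "c \<in> Hor A"
    "hdom A a = vdom A u" "hcod A a = vdom A u'" "hdom A c = vcod A u" "hcod A c = vcod A u'"
    "\<beta> \<in> Sq B" "sleft B \<beta> = fV F u" "sright B \<beta> = fV F u'" "stop B \<beta> = fH F a" "sbot B \<beta> = fH F c"
    using assms(2) A.Sq_corners[of \<alpha>] unfolding is_lift_def by auto
  then have "\<exists>!\<alpha>. is_lift \<alpha> u u' a c \<beta>"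
    using assms(1) unfolding unique_square_lifting_def by blast
  with assms(2,3) show ?thesis by blast
qed

lemma is_cell_Hcat_iff_is_lift:
  "is_cell (Hcat A) \<phi> f f' \<and> fS F \<phi> = \<theta> \<longleftrightarrow> is_lift \<phi> (vid A (hdom A f)) (vid A (hcod A f)) f f' \<theta>"
  unfolding A.is_cell_Hcat_iff is_lift_def by auto

lemma is_cell_Hcat_image_iff:
  assumes "f \<in> Hor A" "f' \<in> Hor A"
  shows "is_cell (Hcat B) \<theta> (fH F f) (fH F f') \<longleftrightarrow>
    \<theta> \<in> Sq B \<and> sleft B \<theta> = vid B (fO F (hdom A f)) \<and> sright B \<theta> = vid B (fO F (hcod A f)) \<and>
    stop B \<theta> = fH F f \<and> sbot B \<theta> = fH F f'"
  using assms unfolding B.is_cell_Hcat_iff by auto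

lemma fully_faithful_Hfun_iff:
  "fully_faithful_on_cells (Hcat A) (Hcat B) (Hfun F) \<longleftrightarrow>
   (\<forall>f\<in>Hor A. \<forall>f'\<in>Hor A. hdom A f = hdom A f' \<longrightarrow> hcod A f = hcod A f' \<longrightarrow>
      (\<forall>\<theta>\<in>Sq B. sleft B \<theta> = vid B (fO F (hdom A f)) \<longrightarrow> sright B \<theta> = vid B (fO F (hcod A f)) \<longrightarrow>
         stop B \<theta> = fH F f \<longrightarrow> sbot B \<theta> = fH F f' \<longrightarrow>
         (\<exists>!\<phi>. is_lift \<phi> (vid A (hdom A f)) (vid A (hcod A f)) f f' \<theta>)))"
  unfolding fully_faithful_on_cells_def A.Hcat_simps Hfun_simps is_cell_Hcat_iff_is_lift
  by (simp add: is_cell_Hcat_image_iff) blast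

lemma ex1_globular_lift:
  assumes "fully_faithful_on_cells (Hcat A) (Hcat B) (Hfun F)"
    and "f \<in> Hor A" "f' \<in> Hor A" "hdom A f = hdom A f'" "hcod A f = hcod A f'"
    and "\<theta> \<in> Sq B" "sleft B \<theta> = vid B (fO F (hdom A f))" "sright B \<theta> = vid B (fO F (hcod A f))"
    "stop B \<theta> = fH F f" "sbot B \<theta> = fH F f'"
  shows "\<exists>!\<phi>. is_lift \<phi> (vid A (hdom A f)) (vid A (hcod A f)) f f' \<theta>"
  using assms unfolding fully_faithful_Hfun_iff by blast

lemma fully_faithful_Hfun_if_unique_square_lifting:
  assumes "unique_square_lifting"
  shows "fully_faithful_on_cells (Hcat A) (Hcat B) (Hfun F)"
  unfolding fully_faithful_Hfun_iff
proof (intro ballI impI)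
  fix f f' \<theta> assume f: "f \<in> Hor A" "f' \<in> Hor A" "hdom A f = hdom A f'" "hcod A f = hcod A f'"
    and \<theta>: "\<theta> \<in> Sq B" "sleft B \<theta> = vid B (fO F (hdom A f))" "sright B \<theta> = vid B (fO F (hcod A f))"
      "stop B \<theta> = fH F f" "sbot B \<theta> = fH F f'"
  have "vid A (hdom A f) \<in> Ver A" "vid A (hcod A f) \<in> Ver A"
    "sleft B \<theta> = fV F (vid A (hdom A f))" "sright B \<theta> = fV F (vid A (hcod A f))"
    using f \<theta> by simp_all
  with assms f \<theta> show "\<exists>!\<phi>. is_lift \<phi> (vid A (hdom A f)) (vid A (hcod A f)) f f' \<theta>"
    unfolding unique_square_lifting_def by simp
qed

lemma full_Vfun_if_unique_square_lifting:
  assumes full: "full_on_morphisms (Hcat A) (Hcat B) (Hfun F)" and lifting: "unique_square_lifting"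
  shows "full_on_morphisms (Vcat A) (Vcat B) (Vfun F)"
  unfolding full_on_morphisms_def is_mor_def
proof (intro ballI allI impI)
  fix u u' \<beta> assume u_obj: "u \<in> TObj (Vcat A)" "u' \<in> TObj (Vcat A)"
    and \<beta>_mor: "\<beta> \<in> TMor (Vcat B) \<and> mdom (Vcat B) \<beta> = G0 (Vfun F) u \<and> mcod (Vcat B) \<beta> = G0 (Vfun F) u'"
  have u: "u \<in> Ver A" "u' \<in> Ver A" and \<beta>: "\<beta> \<in> Sq B" "sleft B \<beta> = fV F u" "sright B \<beta> = fV F u'"
    using u_obj \<beta>_mor by auto
  have "stop B \<beta> \<in> Hor B" "hdom B (stop B \<beta>) = fO F (vdom A u)" "hcod B (stop B \<beta>) = fO F (vdom A u')"
    "sbot B \<beta> \<in> Hor B" "hdom B (sbot B \<beta>) = fO F (vcod A u)" "hcod B (sbot B \<beta>) = fO F (vcod A u')"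
    using u \<beta> B.Sq_corners[of \<beta>] by auto
  then obtain a c where "a \<in> Hor A" "hdom A a = vdom A u" "hcod A a = vdom A u'" "fH F a = stop B \<beta>"
    "c \<in> Hor A" "hdom A c = vcod A u" "hcod A c = vcod A u'" "fH F c = sbot B \<beta>"
    using full u unfolding full_on_morphisms_Hfun_iff by (metis A.Ver_dom_cod)
  then obtain \<alpha> where "is_lift \<alpha> u u' a c \<beta>"
    using unique_square_liftingE[OF lifting u] \<beta> by metis
  then show "\<exists>\<alpha>. (\<alpha> \<in> TMor (Vcat A) \<and> mdom (Vcat A) \<alpha> = u \<and> mcod (Vcat A) \<alpha> = u') \<and> G1 (Vfun F) \<alpha> = \<beta>"
    unfolding is_lift_def by auto
qed

text \<open>The globular components of a 2-cell of V B lift uniquely; the compatibility condition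
  making them a 2-cell of V A holds because both sides are lifts of the same square.\<close>

lemma fully_faithful_Vfun_if_unique_square_lifting:
  assumes lifting: "unique_square_lifting"
  shows "fully_faithful_on_cells (Vcat A) (Vcat B) (Vfun F)"
  unfolding fully_faithful_on_cells_def A.Vcat_simps
proof (intro allI impI)
  fix f f' \<theta> assume f: "f \<in> Sq A" "f' \<in> Sq A" "sleft A f = sleft A f'" "sright A f = sright A f'"
    and \<theta>: "is_cell (Vcat B) \<theta> (G1 (Vfun F) f) (G1 (Vfun F) f')"
  obtain \<tau>0 \<tau>1 where \<theta>_eq: "\<theta> = (fS F f, fS F f', \<tau>0, \<tau>1)"
    and \<tau>: "(fS F f, fS F f', \<tau>0, \<tau>1) \<in> TCell (Vcat B)"
    using \<theta> unfolding is_cell_def by (cases \<theta>) auto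
  note \<tau>' = \<tau>[unfolded B.TCell_Vcat_iff]
  define x y x' y' where "x = hdom A (stop A f)" "y = hcod A (stop A f)"
    "x' = hdom A (sbot A f)" "y' = hcod A (sbot A f)"
  have corners: "hdom A (stop A f') = x" "hcod A (stop A f') = y" "hdom A (sbot A f') = x'"
    "hcod A (sbot A f') = y'" "x \<in> Obj A" "y \<in> Obj A" "x' \<in> Obj A" "y' \<in> Obj A"
    using f A.parallel_Sq_boundary[of f f'] unfolding x_y_x'_y'_def by auto
  obtain \<sigma>0 where \<sigma>0: "is_lift \<sigma>0 (vid A x) (vid A y) (stop A f) (stop A f') \<tau>0"
    using unique_square_liftingE[OF lifting, of "vid A x" "vid A y" "stop A f" "stop A f'" \<tau>0]
      f \<tau>' corners unfolding x_y_x'_y'_def by auto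
  obtain \<sigma>1 where \<sigma>1: "is_lift \<sigma>1 (vid A x') (vid A y') (sbot A f) (sbot A f') \<tau>1"
    using unique_square_liftingE[OF lifting, of "vid A x'" "vid A y'" "sbot A f" "sbot A f'" \<tau>1]
      f \<tau>' corners unfolding x_y_x'_y'_def by auto
  have "is_lift (svcomp A \<sigma>0 f') (sleft A f) (sright A f) (stop A f) (sbot A f') (svcomp B \<tau>0 (fS F f'))"
    "is_lift (svcomp A f \<sigma>1) (sleft A f) (sright A f) (stop A f) (sbot A f') (svcomp B (fS F f) \<tau>1)"
    using f \<sigma>0 \<sigma>1 corners A.Sq_corners[of f] unfolding is_lift_def x_y_x'_y'_def by auto
  then have "svcomp A \<sigma>0 f' = svcomp A f \<sigma>1"
    using is_lift_unique[OF lifting] \<tau>' by simp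
  then have cell: "(f, f', \<sigma>0, \<sigma>1) \<in> TCell (Vcat A)"
    using f \<sigma>0 \<sigma>1 corners unfolding A.TCell_Vcat_iff is_lift_def x_y_x'_y'_def by auto
  show "\<exists>!\<phi>. is_cell (Vcat A) \<phi> f f' \<and> G2 (Vfun F) \<phi> = \<theta>"
  proof
    show "is_cell (Vcat A) (f, f', \<sigma>0, \<sigma>1) f f' \<and> G2 (Vfun F) (f, f', \<sigma>0, \<sigma>1) = \<theta>"
      using cell \<sigma>0 \<sigma>1 \<theta>_eq unfolding is_cell_def is_lift_def by simp
  next
    fix \<phi> assume "is_cell (Vcat A) \<phi> f f' \<and> G2 (Vfun F) \<phi> = \<theta>"
    then obtain \<rho>0 \<rho>1 where \<phi>: "\<phi> = (f, f', \<rho>0, \<rho>1)" "(f, f', \<rho>0, \<rho>1) \<in> TCell (Vcat A)"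
      "fS F \<rho>0 = \<tau>0" "fS F \<rho>1 = \<tau>1"
      unfolding is_cell_def \<theta>_eq by (cases \<phi>) auto
    then have "is_lift \<rho>0 (vid A x) (vid A y) (stop A f) (stop A f') \<tau>0"
      "is_lift \<rho>1 (vid A x') (vid A y') (sbot A f) (sbot A f') \<tau>1"
      unfolding A.TCell_Vcat_iff is_lift_def x_y_x'_y'_def by auto
    with \<phi>(1) \<sigma>0 \<sigma>1 show "\<phi> = (f, f', \<sigma>0, \<sigma>1)"
      using is_lift_unique[OF lifting] by blast
  qed
qed

text \<open>Lift \<beta> to some \<alpha> with the right vertical sides, then correct its top and bottom by
  pasting lifts of the identity squares on F a and F c.\<close>

lemma is_lift_exists:
  assumes ffH: "fully_faithful_on_cells (Hcat A) (Hcat B) (Hfun F)"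
    and fullV: "full_on_morphisms (Vcat A) (Vcat B) (Vfun F)"
    and u: "u \<in> Ver A" "u' \<in> Ver A" and ac: "a \<in> Hor A" "c \<in> Hor A"
    and corners: "hdom A a = vdom A u" "hcod A a = vdom A u'" "hdom A c = vcod A u" "hcod A c = vcod A u'"
    and \<beta>: "\<beta> \<in> Sq B" "sleft B \<beta> = fV F u" "sright B \<beta> = fV F u'" "stop B \<beta> = fH F a" "sbot B \<beta> = fH F c"
  shows "\<exists>\<alpha>. is_lift \<alpha> u u' a c \<beta>"
proof -
  obtain \<alpha> where \<alpha>: "\<alpha> \<in> Sq A" "sleft A \<alpha> = u" "sright A \<alpha> = u'" "fS F \<alpha> = \<beta>"
    using fullV u \<beta> unfolding full_on_morphisms_def is_mor_def by simp blast
  have \<alpha>_corners: "hdom A (stop A \<alpha>) = vdom A u" "hcod A (stop A \<alpha>) = vdom A u'"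
    "hdom A (sbot A \<alpha>) = vcod A u" "hcod A (sbot A \<alpha>) = vcod A u'"
    using \<alpha> A.Sq_corners[of \<alpha>] by auto
  obtain \<tau>0 where \<tau>0: "is_lift \<tau>0 (vid A (vdom A u)) (vid A (vdom A u')) a (stop A \<alpha>) (svid B (fH F a))"
    using ex1_globular_lift[OF ffH ac(1), of "stop A \<alpha>" "svid B (fH F a)"] ac \<alpha> \<alpha>_corners corners \<beta>
    by auto
  obtain \<tau>1 where \<tau>1: "is_lift \<tau>1 (vid A (vcod A u)) (vid A (vcod A u')) (sbot A \<alpha>) c (svid B (fH F c))"
    using ex1_globular_lift[OF ffH _ ac(2), of "sbot A \<alpha>" "svid B (fH F c)"] ac \<alpha> \<alpha>_corners corners \<beta>
    by auto
  have "is_lift (svcomp A \<tau>0 (svcomp A \<alpha> \<tau>1)) u u' a c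
    (svcomp B (svid B (fH F a)) (svcomp B \<beta> (svid B (fH F c))))"
    using \<alpha> \<tau>0 \<tau>1 u unfolding is_lift_def by auto
  moreover have "svcomp B (svid B (fH F a)) (svcomp B \<beta> (svid B (fH F c))) = \<beta>"
    using \<beta> B.svcomp_svid[of \<beta>] by simp
  ultimately show ?thesis by auto
qed

text \<open>Two lifts of \<beta> are joined by a lift of the identity 2-cell on \<beta> in V B, whose globular
  components must be identity squares by faithfulness of H F.\<close>

lemma is_lift_unique_if_fully_faithful:
  assumes ffH: "fully_faithful_on_cells (Hcat A) (Hcat B) (Hfun F)"
    and ffV: "fully_faithful_on_cells (Vcat A) (Vcat B) (Vfun F)"
    and \<alpha>: "is_lift \<alpha> u u' a c \<beta>" and \<alpha>': "is_lift \<alpha>' u u' a c \<beta>"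
  shows "\<alpha> = \<alpha>'"
proof -
  have sq: "\<alpha> \<in> Sq A" "\<alpha>' \<in> Sq A" "sleft A \<alpha> = sleft A \<alpha>'" "sright A \<alpha> = sright A \<alpha>'"
    and \<beta>: "\<beta> \<in> Sq B" "fS F \<alpha> = \<beta>" "fS F \<alpha>' = \<beta>" and ac: "a \<in> Hor A" "c \<in> Hor A"
    using \<alpha> \<alpha>' unfolding is_lift_def by auto
  have "is_cell (Vcat B) (\<beta>, \<beta>, svid B (stop B \<beta>), svid B (sbot B \<beta>)) (fS F \<alpha>) (fS F \<alpha>')"
    using B.TCell_Vcat_cid[OF \<beta>(1)] \<beta> unfolding is_cell_def by simp
  then obtain \<phi> where \<phi>: "is_cell (Vcat A) \<phi> \<alpha> \<alpha>'"
    "G2 (Vfun F) \<phi> = (\<beta>, \<beta>, svid B (stop B \<beta>), svid B (sbot B \<beta>))"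
    using ffV sq unfolding fully_faithful_on_cells_def by (metis A.Vcat_simps Vfun_simps(2))
  then obtain \<rho>0 \<rho>1 where \<rho>: "(\<alpha>, \<alpha>', \<rho>0, \<rho>1) \<in> TCell (Vcat A)"
    "fS F \<rho>0 = svid B (fH F a)" "fS F \<rho>1 = svid B (fH F c)"
    using \<alpha> \<beta> unfolding is_cell_def is_lift_def by (cases \<phi>) auto
  note \<rho>' = \<rho>(1)[unfolded A.TCell_Vcat_iff]
  have "\<exists>!\<phi>. is_lift \<phi> (vid A (hdom A a)) (vid A (hcod A a)) a a (svid B (fH F a))"
    "\<exists>!\<phi>. is_lift \<phi> (vid A (hdom A c)) (vid A (hcod A c)) c c (svid B (fH F c))"
    using ex1_globular_lift[OF ffH] ac by auto
  moreover have "is_lift \<rho>0 (vid A (hdom A a)) (vid A (hcod A a)) a a (svid B (fH F a))"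
    "is_lift \<rho>1 (vid A (hdom A c)) (vid A (hcod A c)) c c (svid B (fH F c))"
    using \<rho> \<rho>' \<alpha> \<alpha>' unfolding is_lift_def by auto
  moreover have "is_lift (svid A a) (vid A (hdom A a)) (vid A (hcod A a)) a a (svid B (fH F a))"
    "is_lift (svid A c) (vid A (hdom A c)) (vid A (hcod A c)) c c (svid B (fH F c))"
    using ac unfolding is_lift_def by auto
  ultimately have "\<rho>0 = svid A a" "\<rho>1 = svid A c" by blast+
  then have "svcomp A (svid A (stop A \<alpha>')) \<alpha>' = svcomp A \<alpha> (svid A (sbot A \<alpha>))"
    using \<rho>' \<alpha> \<alpha>' unfolding is_lift_def by simp
  then show ?thesis
    using sq by simp
qed

lemma unique_square_lifting_if_fully_faithful:
  assumes "fully_faithful_on_cells (Hcat A) (Hcat B) (Hfun F)"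
    and "full_on_morphisms (Vcat A) (Vcat B) (Vfun F)" "fully_faithful_on_cells (Vcat A) (Vcat B) (Vfun F)"
  shows "unique_square_lifting"
  unfolding unique_square_lifting_def
  using is_lift_exists[OF assms(1,2)] is_lift_unique_if_fully_faithful[OF assms(1,3)] by blast

theorem double_trivial_fibration_iff_lack_trivial_fibrations:
  "double_trivial_fibration A B F \<longleftrightarrow>
   lack_trivial_fibration (Hcat A) (Hcat B) (Hfun F) \<and> lack_trivial_fibration (Vcat A) (Vcat B) (Vfun F)"
  unfolding double_trivial_fibration_iff
    lack_trivial_fibration_iff[OF A.unital_twocat_Hcat B.unital_twocat_Hcat twofun_Hfun]
    lack_trivial_fibration_iff[OF A.unital_twocat_Vcat B.unital_twocat_Vcat twofun_Vfun]
  using fully_faithful_Hfun_if_unique_square_lifting full_Vfun_if_unique_square_lifting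
    fully_faithful_Vfun_if_unique_square_lifting unique_square_lifting_if_fully_faithful
  by blast

end

theorem corollary3p14:
  fixes A :: "('o1,'h1,'v1,'s1) dblcat" and B :: "('o2,'h2,'v2,'s2) dblcat"
    and F :: "('o1,'h1,'v1,'s1,'o2,'h2,'v2,'s2) dblfun"
  assumes "is_dblcat A" and "is_dblcat B" and "is_dblfun A B F"
  shows "double_trivial_fibration A B F \<longleftrightarrow>
         lack_trivial_fibration (Hcat A) (Hcat B) (Hfun F) \<and>
         lack_trivial_fibration (Vcat A) (Vcat B) (Vfun F)"
proof -
  interpret double_functor A B F
    using assms by (simp add: double_functor_def double_functor_axioms_def double_category_def)
  show ?thesis
    by (rule double_trivial_fibration_iff_lack_trivial_fibrations)
qed

end
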